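(* Let $X\ge 1$. Let $\mathcal{Q}$ be a set of pairwise coprime positive integers with $\prod_{q \in \mathcal{Q}} q \ge X$. Let $P \subseteq \{1,\dots,X\}$ be an arithmetic progression of length at least $X^{3/4}$ whose common difference is coprime to all $q \in \mathcal{Q}$. Let $d, m \ge 1$ be integers with $(\max_{q \in \mathcal{Q}} q)^{dm} \le X^{1/16}$. Let $\Gamma := \pi_{\mathcal{Q}}(P)\subseteq G_{\mathcal{Q}}$. Let $f \in B(P)$ with $\mathbb{E}_{x\in P} |f(x)| = \alpha$, and let $g := \Psi_{P,\mathcal{Q}} f \in B(G_{\mathcal{Q}})$. Then \[ \mathbb{E}_{x\in\Gamma} |W_{d} g(x)|^{2m} \le \mathbb{E}_{x\in G_{\mathcal{Q}}} |W_{d} g(x)|^{2m} + \alpha^{2m} X^{-1/4}.\]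
   Context: $B(\Sigma)$ denotes the space of complex-valued functions on a finite set $\Sigma$. $G_{\mathcal{Q}} := \prod_{q\in\mathcal{Q}} \mathbb{Z}/q\mathbb{Z}\cong \mathbb{Z}/(\prod_{q\in\mathcal{Q}}q)\mathbb{Z}$, and $\pi_{\mathcal{Q}}:\mathbb{Z}\to G_{\mathcal{Q}}$ is the natural projection. Characters of $G_{\mathcal{Q}}$ are identified with $\xi=\sum_{q\in\mathcal{Q}}\xi_q/q\in\bigoplus_{q\in\mathcal{Q}}(\frac1q\mathbb{Z}/\mathbb{Z})$, acting by $x\mapsto e(\xi x)$ with $e(t)=e^{2\pi i t}$; $|\xi|$ denotes the number of $q$ with $\xi_q\not\equiv 0$. Fourier coefficients: $\widehat g(\xi)=\mathbb{E}_{x\in G_{\mathcal{Q}}} g(x)\overline{e(\xi x)}$. The level-$d$ operator is $W_d g(x)=\sum_{\xi:|\xi|=d}\widehat g(\xi)e(\xi x)$. The lift $\Psi_{P,\mathcal{Q}}:B(P)\to B(G_{\mathcal{Q}})$ is defined by $(\Psi_{P,\mathcal{Q}}f)(\pi_{\mathcal{Q}}(x))=|P|^{-1}|G_{\mathcal{Q}}|f(x)$ for $x\in P$ and $0$ off $\pi_{\mathcal{Q}}(P)$ (well-defined since $\pi_{\mathcal{Q}}$ is injective on $P$). *)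

theory Defs
  imports "HOL-Analysis.Analysis"
begin

text \<open>The group G_Q = prod_{q in Q} Z/qZ, identified (via CRT) with Z/NZ, N = prod Q,
  represented by the residues {0..<N} as integers; pi_Q x = x mod N.\<close>

definition modulusQ :: "nat set \<Rightarrow> int" where
  "modulusQ Q = int (\<Prod>q\<in>Q. q)"

definition GQ :: "nat set \<Rightarrow> int set" where
  "GQ Q = {0..<modulusQ Q}"

definition piQ :: "nat set \<Rightarrow> int \<Rightarrow> int" where
  "piQ Q x = x mod modulusQ Q"

text \<open>Characters xi = sum_q xi_q / q with xi_q in {0..<q}; represented by xi :: nat => nat.\<close>

definition charsQ :: "nat set \<Rightarrow> (nat \<Rightarrow> nat) set" where
  "charsQ Q = (\<Pi>\<^sub>E q\<in>Q. {0..<q})"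

definition charWeight :: "nat set \<Rightarrow> (nat \<Rightarrow> nat) \<Rightarrow> nat" where
  "charWeight Q \<xi> = card {q\<in>Q. \<xi> q \<noteq> 0}"

definition charE :: "nat set \<Rightarrow> (nat \<Rightarrow> nat) \<Rightarrow> int \<Rightarrow> complex" where
  "charE Q \<xi> x = cis (2 * pi * (\<Sum>q\<in>Q. real (\<xi> q) * real_of_int x / real q))"

definition fourierQ :: "nat set \<Rightarrow> (int \<Rightarrow> complex) \<Rightarrow> (nat \<Rightarrow> nat) \<Rightarrow> complex" where
  "fourierQ Q g \<xi> = (\<Sum>x\<in>GQ Q. g x * cnj (charE Q \<xi> x)) / of_int (modulusQ Q)"

definition levelW :: "nat set \<Rightarrow> nat \<Rightarrow> (int \<Rightarrow> complex) \<Rightarrow> int \<Rightarrow> complex" where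
  "levelW Q d g x = (\<Sum>\<xi>\<in>{\<xi>\<in>charsQ Q. charWeight Q \<xi> = d}. fourierQ Q g \<xi> * charE Q \<xi> x)"

definition liftPsi :: "int set \<Rightarrow> nat set \<Rightarrow> (int \<Rightarrow> complex) \<Rightarrow> int \<Rightarrow> complex" where
  "liftPsi P Q f y =
     (if \<exists>x\<in>P. piQ Q x = y
      then of_int (modulusQ Q) / of_nat (card P) * f (THE x. x \<in> P \<and> piQ Q x = y)
      else 0)"

end

theory Submission
  imports Defs
begin

text \<open>
  Write W_d g(x) as a sum of c_\<xi> e(\<xi> x) over the at most (max Q)^(2d) characters \<xi> of
  weight d, where |c_\<xi>| \<le> \<alpha>. Multiplying out |W_d g|^(2m) = (W_d g)^m (conj W_d g)^m gives
  at most (max Q)^(4dm) \<le> X^(1/4) terms b_p e(\<theta>_p x) with |b_p| \<le> \<alpha>^(2m), where the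
  frequency \<theta>_p has denominators among moduli whose product D_p is at most
  (max Q)^(2dm) \<le> X^(1/8). So it suffices to compare the averages of each e(\<theta>_p x) over
  \<Gamma> and over G_Q; as \<pi>_Q is injective on P, the first is an average over P. If \<theta>_p is
  an integer, both averages are 1. Otherwise the average over G_Q vanishes, and the one
  over P is a geometric sum whose ratio e(\<theta>_p r) is a D_p-th root of unity other than 1,
  because the common difference r is coprime to every q; hence it is at most
  D_p/|P| \<le> X^(1/8 - 3/4). In total the two averages of |W_d g|^(2m) differ by at most
  \<alpha>^(2m) X^(1/4 + 1/8 - 3/4).
\<close>

section \<open>Frequencies with pairwise coprime denominators\<close>

definition freqQ :: "nat set \<Rightarrow> (nat \<Rightarrow> int) \<Rightarrow> real" where
  "freqQ Q t = (\<Sum>q\<in>Q. of_int (t q) / real q)"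

lemma of_int_divide_in_Ints_iff:
  assumes "q > 0"
  shows "of_int a / real q \<in> \<int> \<longleftrightarrow> int q dvd a"
proof
  assume "of_int a / real q \<in> \<int>"
  then obtain k where "of_int a / real q = of_int k" by (auto elim: Ints_cases)
  then have "real_of_int a = real_of_int (int q * k)" using assms by (simp add: field_simps)
  then have "a = int q * k" by (simp only: of_int_eq_iff)
  then show "int q dvd a" by simp
qed (use assms in auto)

lemma prod_times_freqQ_in_Ints: "real (\<Prod>q\<in>Q. q) * freqQ Q t \<in> \<int>"
proof (cases "finite Q")
  case True
  have "real (\<Prod>q\<in>Q. q) * (of_int (t q) / real q) \<in> \<int>" if "q \<in> Q" for q
  proof (cases "q = 0")
    case False
    have "real (\<Prod>q\<in>Q. q) = real q * real (\<Prod>q'\<in>Q-{q}. q')"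
      using prod.remove[OF True that] by simp
    then show ?thesis using False by (auto intro!: Ints_mult Ints_prod)
  qed simp
  then show ?thesis unfolding freqQ_def sum_distrib_left by (intro Ints_sum)
qed (simp add: freqQ_def)

lemma freqQ_restrict_support:
  assumes "finite Q"
  shows "freqQ Q t = freqQ {q\<in>Q. t q \<noteq> 0} t"
  unfolding freqQ_def using assms by (intro sum.mono_neutral_right) auto

lemma freqQ_in_Ints_iff:
  assumes "finite Q" "\<forall>q\<in>Q. q > 0" "pairwise coprime Q"
  shows "freqQ Q t \<in> \<int> \<longleftrightarrow> (\<forall>q\<in>Q. int q dvd t q)"
proof
  assume freq: "freqQ Q t \<in> \<int>"
  show "\<forall>q\<in>Q. int q dvd t q"
  proof
    fix q assume q: "q \<in> Q"
    define M where "M = (\<Prod>q'\<in>Q-{q}. q')"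
    have "freqQ Q t = of_int (t q) / real q + freqQ (Q-{q}) t"
      unfolding freqQ_def using sum.remove[OF assms(1) q] .
    then have "real M * (of_int (t q) / real q)
        = real M * freqQ Q t - real M * freqQ (Q-{q}) t"
      by (simp add: algebra_simps)
    also have "\<dots> \<in> \<int>"
    proof (rule Ints_diff)
      show "real M * freqQ Q t \<in> \<int>" using freq by (intro Ints_mult) auto
      show "real M * freqQ (Q-{q}) t \<in> \<int>" unfolding M_def by (rule prod_times_freqQ_in_Ints)
    qed
    finally have "int q dvd int M * t q"
      using q assms(2) of_int_divide_in_Ints_iff[of q "int M * t q"] by simp
    moreover have "coprime q M"
      unfolding M_def using q assms(3) by (intro prod_coprime_right) (auto simp: pairwise_def)
    ultimately show "int q dvd t q"
      by (simp add: coprime_dvd_mult_right_iff)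
  qed
next
  assume "\<forall>q\<in>Q. int q dvd t q"
  then show "freqQ Q t \<in> \<int>"
    unfolding freqQ_def using assms(2) by (intro Ints_sum) (simp add: of_int_divide_in_Ints_iff)
qed

lemma freqQ_mult_coprime_in_Ints_iff:
  assumes "finite Q" "\<forall>q\<in>Q. q > 0" "pairwise coprime Q" "\<forall>q\<in>Q. coprime r (int q)"
  shows "freqQ Q t * of_int r \<in> \<int> \<longleftrightarrow> freqQ Q t \<in> \<int>"
proof -
  have "freqQ Q t * of_int r = freqQ Q (\<lambda>q. r * t q)"
    unfolding freqQ_def sum_distrib_right by (simp add: mult.commute)
  moreover have "int q dvd r * t q \<longleftrightarrow> int q dvd t q" if "q \<in> Q" for q
    using assms(4) that by (simp add: coprime_commute coprime_dvd_mult_right_iff)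
  ultimately show ?thesis using assms(1-3) by (simp add: freqQ_in_Ints_iff)
qed

section \<open>Exponential sums\<close>

lemma cis_2pi_eq_1_iff: "cis (2 * pi * y) = 1 \<longleftrightarrow> y \<in> \<int>"
proof
  assume "cis (2 * pi * y) = 1"
  then obtain n :: int where "2 * pi * y = of_int (2 * n) * pi"
    by (auto simp: cis_conv_exp exp_eq_1)
  then show "y \<in> \<int>" by simp
qed simp

lemma cis_2pi_power: "cis (2 * pi * y) ^ n = cis (2 * pi * (real n * y))"
  by (simp only: Complex.DeMoivre) (simp add: mult_ac)

lemma cis_2pi_add_Ints: "z \<in> \<int> \<Longrightarrow> cis (2 * pi * (y + z)) = cis (2 * pi * y)"
  by (simp add: distrib_left cis_mult[symmetric])

lemma norm_sum_powers_root_of_unity_le: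
  fixes w :: complex
  assumes "D > 0" "w ^ D = 1" "w \<noteq> 1" "norm w = 1"
  shows "norm (\<Sum>k<L. w ^ k) \<le> real D"
proof -
  have "w ^ L = (w ^ D) ^ (L div D) * w ^ (L mod D)"
    by (simp flip: power_mult power_add)
  then have "w ^ L = w ^ (L mod D)"
    using assms(2) by simp
  then have "(\<Sum>k<L. w ^ k) = (\<Sum>k<L mod D. w ^ k)"
    using assms(3) by (simp add: sum_gp_strict)
  also have "norm \<dots> \<le> (\<Sum>k<L mod D. norm (w ^ k))" by (rule norm_sum)
  also have "\<dots> = real (L mod D)" using assms(4) by (simp add: norm_power)
  also have "\<dots> \<le> real D"
    using assms(1) by simp
  finally show ?thesis .
qed

lemma sum_cis_full_period_eq_0:
  assumes "real N * \<theta> \<in> \<int>" "\<theta> \<notin> \<int>"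
  shows "(\<Sum>x\<in>{0..<int N}. cis (2 * pi * (\<theta> * of_int x))) = 0"
proof -
  define z where "z = cis (2 * pi * \<theta>)"
  have "cis (2 * pi * (\<theta> * of_int (int k))) = z ^ k" for k
    unfolding z_def cis_2pi_power by (simp add: mult.commute)
  then have "(\<Sum>x\<in>{0..<int N}. cis (2 * pi * (\<theta> * of_int x))) = (\<Sum>k<N. z ^ k)"
    unfolding image_int_atLeastLessThan[of 0, simplified, symmetric]
    by (subst sum.reindex) (auto simp: lessThan_atLeast0)
  also have "\<dots> = 0"
  proof -
    have "z \<noteq> 1" "z ^ N = 1"
      using assms unfolding z_def cis_2pi_power cis_2pi_eq_1_iff by auto
    then show ?thesis by (simp add: sum_gp_strict)
  qed
  finally show ?thesis .
qed

lemma norm_sum_cis_progression_le: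
  assumes "D > 0" "real D * \<theta> \<in> \<int>" "\<theta> * of_int r \<notin> \<int>"
  shows "norm (\<Sum>k<L. cis (2 * pi * (\<theta> * of_int (a + int k * r)))) \<le> real D"
proof -
  define w where "w = cis (2 * pi * (\<theta> * of_int r))"
  have "(\<Sum>k<L. cis (2 * pi * (\<theta> * of_int (a + int k * r))))
      = cis (2 * pi * (\<theta> * of_int a)) * (\<Sum>k<L. w ^ k)"
    unfolding sum_distrib_left w_def cis_2pi_power
    by (rule sum.cong) (auto simp: cis_mult[symmetric] algebra_simps)
  also have "norm \<dots> = norm (\<Sum>k<L. w ^ k)" by (simp add: norm_mult)
  also have "\<dots> \<le> real D"
  proof (rule norm_sum_powers_root_of_unity_le)
    have "real D * (\<theta> * of_int r) \<in> \<int>"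
      using Ints_mult[OF assms(2) Ints_of_int] by (simp add: mult.assoc)
    then show "w ^ D = 1" unfolding w_def cis_2pi_power by simp
    show "w \<noteq> 1" using assms(3) unfolding w_def cis_2pi_eq_1_iff .
  qed (simp_all add: w_def assms(1))
  finally show ?thesis .
qed

lemma cis_2pi_mod:
  assumes "real N * \<theta> \<in> \<int>"
  shows "cis (2 * pi * (\<theta> * of_int (x mod int N))) = cis (2 * pi * (\<theta> * of_int x))"
proof -
  have "\<theta> * of_int (x mod int N) = \<theta> * of_int x + (- (real N * \<theta>) * of_int (x div int N))"
    by (simp add: minus_div_mult_eq_mod[symmetric] algebra_simps)
  moreover have "- (real N * \<theta>) * of_int (x div int N) \<in> \<int>"
    using Ints_mult[OF Ints_minus[OF assms] Ints_of_int] .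
  ultimately show ?thesis by (metis cis_2pi_add_Ints)
qed

section \<open>Even moments of trigonometric sums\<close>

text \<open>The phase of a term of |z|^(2m) = z^m (cnj z)^m: the first m factors come from z,
  the last m from cnj z.\<close>
definition signed_sum :: "nat \<Rightarrow> (nat \<Rightarrow> 'a::ab_group_add) \<Rightarrow> 'a" where
  "signed_sum m v = (\<Sum>i<2*m. if i < m then v i else - v i)"

lemma prod_lessThan_double_if: "(\<Prod>i<2*m. if i < m then a else b) = a ^ m * b ^ m"
proof -
  have "(\<Prod>i<2*m. if i < m then a else b)
      = (\<Prod>i\<in>{0..<m}. if i < m then a else b) * (\<Prod>i\<in>{m..<2*m}. if i < m then a else b)"
    unfolding lessThan_atLeast0 by (rule prod.atLeastLessThan_concat[symmetric]) simp_all
  also have "\<dots> = a ^ m * b ^ m" by simp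
  finally show ?thesis .
qed

lemma prod_cis: "(\<Prod>i\<in>A. cis (f i)) = cis (\<Sum>i\<in>A. f i)"
  by (induction A rule: infinite_finite_induct) (simp_all add: cis_mult)

lemma norm_sum_cis_power_even:
  fixes c :: "'a \<Rightarrow> complex" and \<theta> :: "'a \<Rightarrow> real"
  assumes "finite S"
  shows "complex_of_real (cmod (\<Sum>\<xi>\<in>S. c \<xi> * cis (2 * pi * (\<theta> \<xi> * y))) ^ (2*m)) =
    (\<Sum>p\<in>{..<2*m} \<rightarrow>\<^sub>E S. (\<Prod>i<2*m. if i < m then c (p i) else cnj (c (p i)))
      * cis (2 * pi * (signed_sum m (\<theta> \<circ> p) * y)))"
proof -
  define z where "z = (\<Sum>\<xi>\<in>S. c \<xi> * cis (2 * pi * (\<theta> \<xi> * y)))"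
  define u where "u = (\<lambda>i \<xi>. (if i < m then c \<xi> else cnj (c \<xi>))
      * cis (2 * pi * ((if i < m then \<theta> \<xi> else - \<theta> \<xi>) * y)))"
  have cnj_z: "cnj z = (\<Sum>\<xi>\<in>S. cnj (c \<xi>) * cis (2 * pi * (- \<theta> \<xi> * y)))"
    unfolding z_def cnj_sum by (simp add: cis_cnj)
  have "complex_of_real (cmod z ^ (2*m)) = complex_of_real ((cmod z)\<^sup>2) ^ m"
    by (simp add: power_mult)
  also have "\<dots> = (z * cnj z) ^ m"
    by (simp only: complex_norm_square)
  also have "\<dots> = (\<Prod>i<2*m. if i < m then z else cnj z)"
    by (simp add: prod_lessThan_double_if power_mult_distrib)
  also have "\<dots> = (\<Prod>i<2*m. \<Sum>\<xi>\<in>S. u i \<xi>)"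
  proof (rule prod.cong)
    show "(if i < m then z else cnj z) = (\<Sum>\<xi>\<in>S. u i \<xi>)" for i
      by (cases "i < m") (simp_all add: u_def cnj_z, simp add: z_def)
  qed simp
  also have "\<dots> = (\<Sum>p\<in>{..<2*m} \<rightarrow>\<^sub>E S. \<Prod>i<2*m. u i (p i))"
    using assms by (simp add: prod_sum_PiE)
  also have "\<dots> = (\<Sum>p\<in>{..<2*m} \<rightarrow>\<^sub>E S. (\<Prod>i<2*m. if i < m then c (p i) else cnj (c (p i)))
      * cis (2 * pi * (signed_sum m (\<theta> \<circ> p) * y)))"
  proof (rule sum.cong[OF refl])
    fix p :: "nat \<Rightarrow> 'a"
    have "(\<Prod>i<2*m. cis (2 * pi * ((if i < m then \<theta> (p i) else - \<theta> (p i)) * y)))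
        = cis (2 * pi * (signed_sum m (\<theta> \<circ> p) * y))"
      unfolding prod_cis signed_sum_def comp_def by (simp add: sum_distrib_left sum_distrib_right)
    then show "(\<Prod>i<2*m. u i (p i)) = (\<Prod>i<2*m. if i < m then c (p i) else cnj (c (p i)))
        * cis (2 * pi * (signed_sum m (\<theta> \<circ> p) * y))"
      unfolding u_def prod.distrib by simp
  qed
  finally show ?thesis unfolding z_def .
qed

section \<open>Characters of a given weight\<close>

definition weightChars :: "nat set \<Rightarrow> nat \<Rightarrow> (nat \<Rightarrow> nat) set" where
  "weightChars Q d = {\<xi>\<in>charsQ Q. charWeight Q \<xi> = d}"

lemma charE_eq: "charE Q \<xi> x = cis (2 * pi * (freqQ Q (int \<circ> \<xi>) * of_int x))"
  unfolding charE_def freqQ_def sum_distrib_right by simp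

lemma signed_sum_freqQ:
  "signed_sum m (\<lambda>i. freqQ Q (u i)) = freqQ Q (\<lambda>q. signed_sum m (\<lambda>i. u i q))"
  unfolding signed_sum_def freqQ_def of_int_sum sum_divide_distrib
  by (subst sum.swap, rule sum.cong) (auto simp: sum_negf)

lemma finite_weightChars: "finite Q \<Longrightarrow> finite (weightChars Q d)"
  unfolding weightChars_def charsQ_def by (simp add: finite_PiE)

lemma norm_levelW_power_eq:
  assumes "finite Q"
  shows "complex_of_real (cmod (levelW Q d g x) ^ (2*m)) =
    (\<Sum>p\<in>{..<2*m} \<rightarrow>\<^sub>E weightChars Q d.
       (\<Prod>i<2*m. if i < m then fourierQ Q g (p i) else cnj (fourierQ Q g (p i)))
       * cis (2 * pi * (freqQ Q (\<lambda>q. signed_sum m (\<lambda>i. int (p i q))) * of_int x)))"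
proof -
  have "complex_of_real (cmod (levelW Q d g x) ^ (2*m)) =
    (\<Sum>p\<in>{..<2*m} \<rightarrow>\<^sub>E weightChars Q d.
       (\<Prod>i<2*m. if i < m then fourierQ Q g (p i) else cnj (fourierQ Q g (p i)))
       * cis (2 * pi * (signed_sum m ((\<lambda>\<xi>. freqQ Q (int \<circ> \<xi>)) \<circ> p) * of_int x)))"
    unfolding levelW_def weightChars_def[symmetric] charE_eq
    by (rule norm_sum_cis_power_even[OF finite_weightChars[OF assms]])
  then show ?thesis by (simp add: comp_def signed_sum_freqQ)
qed

lemma card_weightChars_le:
  assumes "finite Q"
  shows "card (weightChars Q d) \<le> Max Q ^ (2*d)"
proof -
  txt \<open>A character is encoded by the list of its nonzero coordinates \<open>(q, \<xi> q)\<close>.\<close>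
  define M where "M = Max Q"
  define enc where "enc \<xi> = map (\<lambda>q. (q, \<xi> q)) (sorted_list_of_set {q\<in>Q. \<xi> q \<noteq> 0})"
    for \<xi> :: "nat \<Rightarrow> nat"
  have set_enc: "set (enc \<xi>) = (\<lambda>q. (q, \<xi> q)) ` {q\<in>Q. \<xi> q \<noteq> 0}" for \<xi>
    unfolding enc_def using assms by simp
  then have mem_enc: "(q, v) \<in> set (enc \<xi>) \<longleftrightarrow> q \<in> Q \<and> v = \<xi> q \<and> v \<noteq> 0" for q v \<xi>
    by auto
  have "inj_on enc (weightChars Q d)"
  proof (rule inj_onI)
    fix \<xi> \<eta> assume "\<xi> \<in> weightChars Q d" "\<eta> \<in> weightChars Q d" and enc: "enc \<xi> = enc \<eta>"
    then have "\<xi> \<in> charsQ Q" "\<eta> \<in> charsQ Q" unfolding weightChars_def by auto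
    moreover have "\<xi> q = \<eta> q" if "q \<in> Q" for q
    proof (cases "\<xi> q = 0 \<and> \<eta> q = 0")
      case False
      then have "(q, \<xi> q) \<in> set (enc \<xi>) \<or> (q, \<eta> q) \<in> set (enc \<eta>)"
        using that by (simp add: mem_enc)
      then have "(q, \<xi> q) \<in> set (enc \<eta>) \<or> (q, \<eta> q) \<in> set (enc \<xi>)"
        using enc by simp
      then show ?thesis by (auto simp: mem_enc)
    qed simp
    ultimately show "\<xi> = \<eta>" unfolding charsQ_def by (rule PiE_ext)
  qed
  moreover have "enc ` weightChars Q d \<subseteq> {xs. set xs \<subseteq> {1..M} \<times> {0..<M} \<and> length xs = d}"
  proof clarify
    fix \<xi> assume \<xi>: "\<xi> \<in> weightChars Q d"
    have "length (enc \<xi>) = d"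
      using \<xi> assms unfolding enc_def weightChars_def charWeight_def by simp
    moreover have "q \<le> M" "\<xi> q < q" if "q \<in> Q" for q
      using \<xi> assms that unfolding M_def weightChars_def charsQ_def by auto
    ultimately show "set (enc \<xi>) \<subseteq> {1..M} \<times> {0..<M} \<and> length (enc \<xi>) = d"
      unfolding set_enc by fastforce
  qed
  ultimately have "card (weightChars Q d) \<le> card {xs. set xs \<subseteq> {1..M} \<times> {0..<M} \<and> length xs = d}"
    by (simp add: card_image[symmetric] card_mono finite_lists_length_eq)
  also have "\<dots> = M ^ (2*d)"
    by (simp add: card_lists_length_eq power_mult power2_eq_square)
  finally show ?thesis unfolding M_def .
qed

lemma prod_support_signed_sum_le:
  assumes "finite Q" and p: "\<forall>i<2*m. p i \<in> weightChars Q d"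
  shows "(\<Prod>q\<in>{q\<in>Q. signed_sum m (\<lambda>i. int (p i q)) \<noteq> 0}. q) \<le> Max Q ^ (2*d*m)"
proof -
  define U where "U = {q\<in>Q. signed_sum m (\<lambda>i. int (p i q)) \<noteq> 0}"
  define V where "V i = {q\<in>Q. p i q \<noteq> 0}" for i
  have card_V: "card (V i) = d" if "i < 2*m" for i
    using p that unfolding V_def weightChars_def charWeight_def by auto
  have V_pos: "0 < q" if "i < 2*m" "q \<in> V i" for i q
  proof -
    have "p i q < q"
      using p that unfolding V_def weightChars_def charsQ_def by (auto simp: PiE_iff)
    then show ?thesis by simp
  qed
  have "U \<subseteq> (\<Union>i<2*m. V i)"
    unfolding U_def V_def signed_sum_def by (force intro: sum.neutral)
  then have card_U: "card U \<le> 2*d*m"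
    using card_UN_le[of "{..<2*m}" V] card_mono[of "\<Union>i<2*m. V i" U] assms(1) card_V
    by (simp add: V_def mult_ac)
  have Max_ge_1: "1 \<le> Max Q" if md: "2*d*m > 0"
  proof -
    have "card (V 0) > 0" using card_V[of 0] md by simp
    then obtain q where q: "q \<in> V 0" by (metis card_gt_0_iff ex_in_conv)
    then have "q \<le> Max Q" using assms(1) by (simp add: V_def)
    then show ?thesis using V_pos[of 0 q] q md by simp
  qed
  have "(\<Prod>q\<in>U. q) \<le> (\<Prod>q\<in>U. Max Q)"
    using assms(1) by (intro prod_mono) (auto simp: U_def)
  also have "\<dots> = Max Q ^ card U" by simp
  also have "\<dots> \<le> Max Q ^ (2*d*m)"
    using card_U Max_ge_1 by (cases "2*d*m = 0") (auto intro: power_increasing)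
  finally show ?thesis unfolding U_def .
qed

section \<open>The lift and its Fourier coefficients\<close>

lemma modulusQ_pos: "\<forall>q\<in>Q. q > 0 \<Longrightarrow> modulusQ Q > 0"
  unfolding modulusQ_def by (simp add: prod_pos)

lemma inj_on_piQ:
  assumes "\<forall>x\<in>P. \<forall>y\<in>P. \<bar>x - y\<bar> < modulusQ Q"
  shows "inj_on (piQ Q) P"
proof (rule inj_onI)
  fix x y assume "x \<in> P" "y \<in> P" "piQ Q x = piQ Q y"
  then have "modulusQ Q dvd x - y" "\<bar>x - y\<bar> < modulusQ Q"
    using assms unfolding piQ_def by (auto simp: mod_eq_dvd_iff)
  then show "x = y" using dvd_imp_le_int[of "x - y" "modulusQ Q"] by auto
qed

lemma inj_on_piQ_if_bounded:
  assumes "\<forall>x\<in>P. 1 \<le> x \<and> real_of_int x \<le> X" "X \<le> real (\<Prod>q\<in>Q. q)"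
  shows "inj_on (piQ Q) P"
proof (rule inj_on_piQ, intro ballI)
  fix x y assume "x \<in> P" "y \<in> P"
  then have "1 \<le> real_of_int x" "real_of_int x \<le> X" "1 \<le> real_of_int y" "real_of_int y \<le> X"
    using assms(1) by auto
  then have "real_of_int \<bar>x - y\<bar> < real_of_int (modulusQ Q)"
    using assms(2) by (auto simp: abs_if modulusQ_def)
  then show "\<bar>x - y\<bar> < modulusQ Q" by linarith
qed

lemma liftPsi_piQ:
  assumes "inj_on (piQ Q) P" "x \<in> P"
  shows "liftPsi P Q f (piQ Q x) = of_int (modulusQ Q) / of_nat (card P) * f x"
proof -
  have "(THE x'. x' \<in> P \<and> piQ Q x' = piQ Q x) = x"
    using assms by (auto dest: inj_onD)
  then show ?thesis unfolding liftPsi_def using assms(2) by auto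
qed

lemma norm_fourierQ_le: "cmod (fourierQ Q g \<xi>) \<le> (\<Sum>x\<in>GQ Q. cmod (g x)) / of_int (modulusQ Q)"
proof -
  have "cmod (\<Sum>x\<in>GQ Q. g x * cnj (charE Q \<xi> x)) \<le> (\<Sum>x\<in>GQ Q. cmod (g x))"
    using norm_sum[of "\<lambda>x. g x * cnj (charE Q \<xi> x)"] by (simp add: norm_mult charE_def)
  moreover have "cmod (of_int (modulusQ Q)) = of_int (modulusQ Q)"
    by (simp only: norm_of_int) (simp add: modulusQ_def prod_nonneg)
  ultimately show ?thesis
    unfolding fourierQ_def norm_divide by (simp add: divide_right_mono)
qed

lemma norm_fourierQ_liftPsi_le:
  assumes "\<forall>q\<in>Q. q > 0" "finite P" "inj_on (piQ Q) P"
  shows "cmod (fourierQ Q (liftPsi P Q f) \<xi>) \<le> (\<Sum>x\<in>P. cmod (f x)) / real (card P)"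
proof -
  define N where "N = modulusQ Q"
  have N_pos: "N > 0" unfolding N_def using assms(1) by (rule modulusQ_pos)
  have "(\<Sum>x\<in>GQ Q. cmod (liftPsi P Q f x)) = (\<Sum>x\<in>piQ Q ` P. cmod (liftPsi P Q f x))"
    using N_pos by (intro sum.mono_neutral_right)
      (auto simp: GQ_def piQ_def liftPsi_def N_def assms(2))
  also have "\<dots> = (\<Sum>x\<in>P. cmod (liftPsi P Q f (piQ Q x)))"
    using assms(3) by (simp add: sum.reindex)
  also have "\<dots> = real_of_int N * ((\<Sum>x\<in>P. cmod (f x)) / real (card P))"
    using N_pos assms(3)
    by (simp add: liftPsi_piQ norm_mult norm_divide sum_distrib_left sum_divide_distrib N_def)
  finally show ?thesis
    using norm_fourierQ_le[of Q "liftPsi P Q f" \<xi>] N_pos by (simp add: N_def)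
qed

section \<open>Averages over a progression\<close>

lemma progression_eq_image: "{a + int k * r | k. k < L} = (\<lambda>k. a + int k * r) ` {..<L}"
  by auto

lemma inj_on_progression: "r \<noteq> 0 \<Longrightarrow> inj_on (\<lambda>k. a + int k * r) A"
  by (rule inj_onI) simp

lemma average_difference_le:
  fixes h :: "'x \<Rightarrow> real" and \<beta> \<epsilon> :: real
    and b :: "'i \<Rightarrow> complex" and \<phi> :: "'i \<Rightarrow> 'x \<Rightarrow> complex"
  assumes "finite I"
    and h: "\<And>y. complex_of_real (h y) = (\<Sum>p\<in>I. b p * \<phi> p y)"
    and b: "\<And>p. p \<in> I \<Longrightarrow> cmod (b p) \<le> \<beta>"
    and \<phi>: "\<And>p. p \<in> I \<Longrightarrow>
      cmod ((\<Sum>y\<in>A. \<phi> p y) / card A - (\<Sum>y\<in>B. \<phi> p y) / card B) \<le> \<epsilon>"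
  shows "(\<Sum>y\<in>A. h y) / card A - (\<Sum>y\<in>B. h y) / card B \<le> card I * (\<beta> * \<epsilon>)"
proof -
  define \<delta> where "\<delta> p = (\<Sum>y\<in>A. \<phi> p y) / card A - (\<Sum>y\<in>B. \<phi> p y) / card B" for p
  have "complex_of_real ((\<Sum>y\<in>A. h y) / card A - (\<Sum>y\<in>B. h y) / card B) = (\<Sum>p\<in>I. b p * \<delta> p)"
    unfolding \<delta>_def of_real_diff of_real_divide of_real_sum h
    by (subst (1 2) sum.swap) (simp add: sum_subtractf right_diff_distrib sum_divide_distrib
        sum_distrib_left)
  then have "(\<Sum>y\<in>A. h y) / card A - (\<Sum>y\<in>B. h y) / card B \<le> cmod (\<Sum>p\<in>I. b p * \<delta> p)"
    by (metis abs_ge_self norm_of_real)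
  also have "\<dots> \<le> (\<Sum>p\<in>I. cmod (b p) * cmod (\<delta> p))"
    using norm_sum[of "\<lambda>p. b p * \<delta> p" I] by (simp add: norm_mult)
  also have "\<dots> \<le> (\<Sum>p\<in>I. \<beta> * \<epsilon>)"
    using b \<phi> by (intro sum_mono mult_mono) (auto simp: \<delta>_def intro: order_trans[OF norm_ge_zero])
  finally show ?thesis by simp
qed

lemma average_cis_progression_close:
  fixes t :: "nat \<Rightarrow> int"
  assumes Q: "finite Q" "\<forall>q\<in>Q. q > 0" "pairwise coprime Q"
    and r: "r \<noteq> 0" "\<forall>q\<in>Q. coprime r (int q)"
    and P: "P = {a + int k * r | k. k < L}" "inj_on (piQ Q) P" "L > 0"
  defines "\<theta> \<equiv> freqQ Q t"
  shows "cmod ((\<Sum>y\<in>piQ Q ` P. cis (2 * pi * (\<theta> * of_int y))) / card (piQ Q ` P)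
            - (\<Sum>y\<in>GQ Q. cis (2 * pi * (\<theta> * of_int y))) / card (GQ Q))
         \<le> real (\<Prod>q\<in>{q\<in>Q. t q \<noteq> 0}. q) / L"
proof -
  define N where "N = (\<Prod>q\<in>Q. q)"
  define e where "e y = cis (2 * pi * (\<theta> * of_int y))" for y
  have N_pos: "N > 0" and G_eq: "GQ Q = {0..<int N}" and "piQ Q x = x mod int N" for x
    using Q(2) unfolding N_def GQ_def piQ_def modulusQ_def by (auto simp: prod_pos)
  moreover have N_\<theta>: "real N * \<theta> \<in> \<int>"
    unfolding N_def \<theta>_def by (rule prod_times_freqQ_in_Ints)
  ultimately have "e (piQ Q x) = e x" for x
    unfolding e_def by (simp add: cis_2pi_mod)
  then have "(\<Sum>y\<in>piQ Q ` P. e y) = (\<Sum>k<L. e (a + int k * r))"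
    using P(2) r(1) unfolding P(1) progression_eq_image
    by (simp add: sum.reindex inj_on_progression)
  moreover have "card (piQ Q ` P) = L"
    using P(2) r(1) unfolding P(1) progression_eq_image
    by (simp add: card_image inj_on_progression)
  ultimately have avg_P: "(\<Sum>y\<in>piQ Q ` P. e y) / card (piQ Q ` P) = (\<Sum>k<L. e (a + int k * r)) / L"
    by simp
  show ?thesis
  proof (cases "\<theta> \<in> \<int>")
    case True
    then have "e y = 1" for y
      unfolding e_def by (simp add: Ints_mult)
    then show ?thesis
      using avg_P N_pos P(3) unfolding e_def[symmetric] G_eq by (simp add: prod_nonneg)
  next
    case False
    define D where "D = (\<Prod>q\<in>{q\<in>Q. t q \<noteq> 0}. q)"
    have "D > 0" unfolding D_def using Q(2) by (intro prod_pos) auto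
    moreover have "real D * \<theta> \<in> \<int>"
      unfolding D_def \<theta>_def freqQ_restrict_support[OF Q(1)] by (rule prod_times_freqQ_in_Ints)
    moreover have "\<theta> * of_int r \<notin> \<int>"
      using False Q r(2) unfolding \<theta>_def by (simp add: freqQ_mult_coprime_in_Ints_iff)
    ultimately have "cmod (\<Sum>k<L. e (a + int k * r)) \<le> real D"
      unfolding e_def by (rule norm_sum_cis_progression_le)
    moreover have "(\<Sum>y\<in>GQ Q. e y) = 0"
      unfolding G_eq e_def using N_\<theta> False by (rule sum_cis_full_period_eq_0)
    ultimately show ?thesis
      using avg_P unfolding e_def[symmetric] D_def[symmetric]
      by (simp add: norm_divide divide_right_mono)
  qed
qed

lemma levelW_average_progression_le:
  fixes f :: "int \<Rightarrow> complex" and d m :: nat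
  assumes Q: "finite Q" "\<forall>q\<in>Q. q > 0" "pairwise coprime Q"
    and r: "r \<noteq> 0" "\<forall>q\<in>Q. coprime r (int q)"
    and P: "P = {a + int k * r | k. k < L}" "inj_on (piQ Q) P" "L > 0"
  defines "h \<equiv> \<lambda>x. cmod (levelW Q d (liftPsi P Q f) x) ^ (2*m)"
    and "\<alpha> \<equiv> (\<Sum>x\<in>P. cmod (f x)) / real (card P)"
  shows "(\<Sum>x\<in>piQ Q ` P. h x) / card (piQ Q ` P)
         \<le> (\<Sum>x\<in>GQ Q. h x) / card (GQ Q)
            + real (Max Q) ^ (4*d*m) * (\<alpha> ^ (2*m) * (real (Max Q) ^ (2*d*m) / L))"
proof -
  define I where "I = {..<2*m} \<rightarrow>\<^sub>E weightChars Q d"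
  define c where "c = fourierQ Q (liftPsi P Q f)"
  define b where "b p = (\<Prod>i<2*m. if i < m then c (p i) else cnj (c (p i)))"
    for p :: "nat \<Rightarrow> nat \<Rightarrow> nat"
  define t where "t p q = signed_sum m (\<lambda>i. int (p i q))" for p :: "nat \<Rightarrow> nat \<Rightarrow> nat" and q
  define \<epsilon> where "\<epsilon> = real (Max Q) ^ (2*d*m) / L"
  have finite_I: "finite I"
    unfolding I_def using Q(1) by (simp add: finite_PiE finite_weightChars)
  have "(\<Sum>x\<in>piQ Q ` P. h x) / card (piQ Q ` P) - (\<Sum>x\<in>GQ Q. h x) / card (GQ Q)
        \<le> card I * (\<alpha> ^ (2*m) * \<epsilon>)"
  proof (rule average_difference_le[OF finite_I])
    show "complex_of_real (h x) = (\<Sum>p\<in>I. b p * cis (2 * pi * (freqQ Q (t p) * of_int x)))" for x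
      unfolding h_def I_def b_def c_def t_def using Q(1) by (rule norm_levelW_power_eq)
    have "finite P" unfolding P(1) progression_eq_image by simp
    then have "cmod (c \<xi>) \<le> \<alpha>" for \<xi>
      unfolding c_def \<alpha>_def by (rule norm_fourierQ_liftPsi_le[OF Q(2) _ P(2)])
    then have "(\<Prod>i<2*m. cmod (if i < m then c (p i) else cnj (c (p i)))) \<le> (\<Prod>i<2*m. \<alpha>)" for p
      by (intro prod_mono) simp
    then show "cmod (b p) \<le> \<alpha> ^ (2*m)" for p
      by (simp add: b_def prod_norm)
    fix p assume "p \<in> I"
    then have "(\<Prod>q\<in>{q\<in>Q. t p q \<noteq> 0}. q) \<le> Max Q ^ (2*d*m)"
      unfolding I_def t_def using Q(1) by (intro prod_support_signed_sum_le) auto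
    then have "real (\<Prod>q\<in>{q\<in>Q. t p q \<noteq> 0}. q) / L \<le> \<epsilon>"
      unfolding \<epsilon>_def
      by (intro divide_right_mono) (simp_all only: of_nat_power[symmetric] of_nat_le_iff of_nat_0_le_iff)
    with average_cis_progression_close[OF Q r P]
    show "cmod ((\<Sum>y\<in>piQ Q ` P. cis (2 * pi * (freqQ Q (t p) * of_int y))) / card (piQ Q ` P)
        - (\<Sum>y\<in>GQ Q. cis (2 * pi * (freqQ Q (t p) * of_int y))) / card (GQ Q)) \<le> \<epsilon>"
      by (rule order_trans)
  qed
  moreover have "card I \<le> (Max Q ^ (2*d)) ^ (2*m)"
    unfolding I_def by (simp add: card_PiE power_mono card_weightChars_le Q(1))
  then have "real (card I) \<le> real (Max Q) ^ (4*d*m)"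
    by (simp flip: of_nat_power power_mult add: mult_ac)
  then have "real (card I) * (\<alpha> ^ (2*m) * \<epsilon>) \<le> real (Max Q) ^ (4*d*m) * (\<alpha> ^ (2*m) * \<epsilon>)"
    by (rule mult_right_mono) (simp add: \<alpha>_def \<epsilon>_def)
  ultimately show ?thesis unfolding \<epsilon>_def by simp
qed

lemma power_le_powr_of_le:
  fixes X y :: real
  assumes "X > 0" "0 \<le> y" "y \<le> X powr e"
  shows "y ^ k \<le> X powr (k * e)"
  using power_mono[OF assms(3,2), of k] assms(1) by (simp add: powr_power)

lemma error_term_le:
  fixes X M A :: real
  assumes "X \<ge> 1" "real L \<ge> X powr (3/4)" "0 \<le> M" "M ^ (d*m) \<le> X powr (1/16)" "0 \<le> A"
  shows "M ^ (4*d*m) * (A * (M ^ (2*d*m) / L)) \<le> A * X powr (-1/4)"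
proof -
  have X_pos: "X > 0" using assms(1) by simp
  have "M ^ (4*d*m) * (A * (M ^ (2*d*m) / L)) \<le> X powr (1/4) * (A * (X powr (1/8) / X powr (3/4)))"
  proof (intro mult_mono mult_left_mono frac_le)
    show "M ^ (4*d*m) \<le> X powr (1/4)" "M ^ (2*d*m) \<le> X powr (1/8)"
      using power_le_powr_of_le[OF X_pos _ assms(4), of 4] power_le_powr_of_le[OF X_pos _ assms(4), of 2]
        assms(3) by (simp_all flip: power_mult add: mult_ac)
  qed (use assms X_pos in auto)
  also have "\<dots> = A * X powr (- 3/8)"
    using X_pos by (simp add: powr_add[symmetric] powr_diff[symmetric])
  also have "\<dots> \<le> A * X powr (-1/4)"
    using assms(1,5) by (intro mult_left_mono powr_mono) auto
  finally show ?thesis .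
qed

theorem lemma3p4:
  fixes X :: real and Q :: "nat set" and P :: "int set"
    and d m :: nat and f :: "int \<Rightarrow> complex" and \<alpha> :: real
  assumes X_ge: "X \<ge> 1"
    and Q_fin: "finite Q"
    and Q_pos: "\<forall>q\<in>Q. q > 0"
    and Q_coprime: "\<forall>q1\<in>Q. \<forall>q2\<in>Q. q1 \<noteq> q2 \<longrightarrow> coprime q1 q2"
    and Q_prod: "real (\<Prod>q\<in>Q. q) \<ge> X"
    and P_AP: "\<exists>a r L. r > 0 \<and> (\<forall>q\<in>Q. coprime r (int q))
                  \<and> P = {a + int k * r | k. k < L} \<and> real L \<ge> X powr (3/4)"
    and P_range: "\<forall>x\<in>P. 1 \<le> x \<and> real_of_int x \<le> X"
    and d_pos: "d \<ge> 1" and m_pos: "m \<ge> 1"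
    and dm_bound: "real (Max Q) ^ (d * m) \<le> X powr (1/16)"
    and alpha_def: "\<alpha> = (\<Sum>x\<in>P. cmod (f x)) / real (card P)"
  shows "(\<Sum>x\<in>piQ Q ` P. cmod (levelW Q d (liftPsi P Q f) x) ^ (2*m)) / real (card (piQ Q ` P))
         \<le> (\<Sum>x\<in>GQ Q. cmod (levelW Q d (liftPsi P Q f) x) ^ (2*m)) / real (card (GQ Q))
            + \<alpha> ^ (2*m) * X powr (-1/4)"
proof -
  obtain a r L where r: "r > 0" "\<forall>q\<in>Q. coprime r (int q)"
    and P: "P = {a + int k * r | k. k < L}" and L: "real L \<ge> X powr (3/4)"
    using P_AP by blast
  let ?h = "\<lambda>x. cmod (levelW Q d (liftPsi P Q f) x) ^ (2*m)"
  have "pairwise coprime Q" using Q_coprime unfolding pairwise_def by blast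
  moreover have "inj_on (piQ Q) P" using P_range Q_prod by (rule inj_on_piQ_if_bounded)
  moreover have "L > 0" using L X_ge by (cases L) auto
  ultimately have "(\<Sum>x\<in>piQ Q ` P. ?h x) / card (piQ Q ` P) \<le> (\<Sum>x\<in>GQ Q. ?h x) / card (GQ Q)
      + real (Max Q) ^ (4*d*m) * (\<alpha> ^ (2*m) * (real (Max Q) ^ (2*d*m) / L))"
    using levelW_average_progression_le[OF Q_fin Q_pos _ _ r(2) P, of d f m] r(1)
    unfolding alpha_def by auto
  moreover have "real (Max Q) ^ (4*d*m) * (\<alpha> ^ (2*m) * (real (Max Q) ^ (2*d*m) / L))
      \<le> \<alpha> ^ (2*m) * X powr (-1/4)"
    using X_ge L dm_bound by (intro error_term_le) (auto simp: alpha_def)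
  ultimately show ?thesis by linarith
qed

end
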